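(* Let $\mathbb F$ be a field and let $P(s)\in\mathbb F[s]^{p\times q}$ be a matrix pencil of rank $1$. 1. If $P(s)$ has a nontrivial invariant factor, then there exist nonzero vectors $u\in\mathbb F^p$, $\bar v\in\mathbb F^q$ and nonzero pencils $\bar u(s)\in\mathbb F[s]^p$, $v(s)\in\mathbb F[s]^q$ such that $P(s)=uv(s)^T=\bar u(s)\bar v^T$. 2. If $P(s)$ has an infinite elementary divisor, then there exist nonzero vectors $u\in\mathbb F^p$, $v\in\mathbb F^q$ such that $P(s)=uv^T$. 3. If $P(s)$ has a positive column minimal index, then there exist a nonzero vector $u\in\mathbb F^p$ and a nonzero pencil $v(s)\in\mathbb F[s]^q$ such that $P(s)=uv(s)^T$. 4. If $P(s)$ has a positive row minimal index, then there exist a nonzero vector $v\in\mathbb F^q$ and a nonzero pencil $u(s)\in\mathbb F[s]^p$ such that $P(s)=u(s)v^T$.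
   Context: A matrix pencil is a polynomial matrix of degree at most $1$, $G(s)=G_0+sG_1$; a vector pencil in $\mathbb F[s]^p$ is a column vector of degree at most $1$. The rank of a pencil is its normal rank. Its Kronecker invariants (complete invariants under strict equivalence $G\mapsto QGR$, $Q,R$ invertible constant matrices) are the invariant factors (monic polynomials in $\mathbb F[s]$; "nontrivial" means of positive degree), the infinite elementary divisors $t^{k}$ with $k>0$, and the column and row minimal indices. *)

theory Defs
  imports "Jordan_Normal_Form.Determinant" "Jordan_Normal_Form.DL_Submatrix"
    "HOL-Computational_Algebra.Polynomial"
begin

definition is_pencil :: "'a::field poly mat \<Rightarrow> bool" where
  "is_pencil P \<longleftrightarrow> (\<forall>i<dim_row P. \<forall>j<dim_col P. degree (P $$ (i,j)) \<le> 1)"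

definition is_vec_pencil :: "'a::field poly vec \<Rightarrow> bool" where
  "is_vec_pencil v \<longleftrightarrow> (\<forall>i<dim_vec v. degree (v $ i) \<le> 1)"

definition const_vec :: "'a::field vec \<Rightarrow> 'a poly vec" where
  "const_vec u = map_vec (\<lambda>c. [:c:]) u"

definition outer :: "'a::comm_ring_1 vec \<Rightarrow> 'a vec \<Rightarrow> 'a mat" where
  "outer x y = mat (dim_vec x) (dim_vec y) (\<lambda>(i,j). x $ i * y $ j)"

definition minors :: "'a::comm_ring_1 mat \<Rightarrow> nat \<Rightarrow> 'a set" where
  "minors A k = {det (submatrix A I J) | I J. I \<subseteq> {..<dim_row A} \<and> J \<subseteq> {..<dim_col A}
                   \<and> card I = k \<and> card J = k}"

definition normal_rank :: "'a::field poly mat \<Rightarrow> nat" where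
  "normal_rank A = Max {k. \<exists>m \<in> minors A k. m \<noteq> 0}"

definition det_divisor :: "'a::field poly mat \<Rightarrow> nat \<Rightarrow> 'a poly" where
  "det_divisor A k =
     (if minors A k \<subseteq> {0} then 0
      else (THE d. lead_coeff d = 1 \<and> (\<forall>m\<in>minors A k. d dvd m) \<and>
                   (\<forall>e. (\<forall>m\<in>minors A k. e dvd m) \<longrightarrow> e dvd d)))"

definition invariant_factor :: "'a::field poly mat \<Rightarrow> nat \<Rightarrow> 'a poly" where
  "invariant_factor A k = det_divisor A k div det_divisor A (k - 1)"

definition has_nontrivial_invariant_factor :: "'a::field poly mat \<Rightarrow> bool" where
  "has_nontrivial_invariant_factor A \<longleftrightarrow>
     (\<exists>k\<in>{1..normal_rank A}. degree (invariant_factor A k) > 0)"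

text \<open>Reversal of a pencil G0 + s G1 is G1 + t G0; infinite elementary divisors of G
  are the elementary divisors t^k (k > 0) of the reversal at t = 0.\<close>
definition rev_pencil :: "'a::field poly mat \<Rightarrow> 'a poly mat" where
  "rev_pencil A = map_mat (\<lambda>f. [:coeff f 1, coeff f 0:]) A"

definition has_infinite_elementary_divisor :: "'a::field poly mat \<Rightarrow> bool" where
  "has_infinite_elementary_divisor A \<longleftrightarrow>
     (\<exists>k\<in>{1..normal_rank (rev_pencil A)}. [:0, 1:] dvd invariant_factor (rev_pencil A) k)"

definition vec_degree :: "'a::zero poly vec \<Rightarrow> nat" where
  "vec_degree x = Max (insert 0 {degree (x $ i) | i. i < dim_vec x})"

definition lin_comb :: "(nat \<Rightarrow> 'a::comm_ring_1) \<Rightarrow> 'a vec list \<Rightarrow> nat \<Rightarrow> 'a" where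
  "lin_comb c xs j = (\<Sum>i<length xs. c i * (xs ! i $ j))"

text \<open>xs is a polynomial basis of the rational right null space of A: the vectors are
  polynomial null vectors, linearly independent over F(s) (equivalently over F[s]),
  and span the null space over F(s) (every polynomial null vector becomes, after
  multiplication by a nonzero polynomial, an F[s]-combination of them).\<close>
definition right_null_poly_basis :: "'a::field poly mat \<Rightarrow> 'a poly vec list \<Rightarrow> bool" where
  "right_null_poly_basis A xs \<longleftrightarrow>
     (\<forall>x\<in>set xs. x \<in> carrier_vec (dim_col A) \<and> A *\<^sub>v x = 0\<^sub>v (dim_row A)) \<and>
     (\<forall>c. (\<forall>j<dim_col A. lin_comb c xs j = 0) \<longrightarrow> (\<forall>i<length xs. c i = 0)) \<and>
     (\<forall>y\<in>carrier_vec (dim_col A). A *\<^sub>v y = 0\<^sub>v (dim_row A) \<longrightarrow>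
        (\<exists>d c. d \<noteq> 0 \<and> (\<forall>j<dim_col A. d * y $ j = lin_comb c xs j)))"

definition right_minimal_basis :: "'a::field poly mat \<Rightarrow> 'a poly vec list \<Rightarrow> bool" where
  "right_minimal_basis A xs \<longleftrightarrow> right_null_poly_basis A xs \<and>
     (\<forall>ys. right_null_poly_basis A ys \<longrightarrow>
        (\<Sum>x\<leftarrow>xs. vec_degree x) \<le> (\<Sum>y\<leftarrow>ys. vec_degree y))"

definition column_minimal_indices :: "'a::field poly mat \<Rightarrow> nat multiset set" where
  "column_minimal_indices A = {mset (map vec_degree xs) | xs. right_minimal_basis A xs}"

definition row_minimal_indices :: "'a::field poly mat \<Rightarrow> nat multiset set" where
  "row_minimal_indices A = column_minimal_indices (transpose_mat A)"

definition has_pos_column_minimal_index :: "'a::field poly mat \<Rightarrow> bool" where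
  "has_pos_column_minimal_index A \<longleftrightarrow> (\<exists>M\<in>column_minimal_indices A. \<exists>e\<in>#M. e > 0)"

definition has_pos_row_minimal_index :: "'a::field poly mat \<Rightarrow> bool" where
  "has_pos_row_minimal_index A \<longleftrightarrow> (\<exists>M\<in>row_minimal_indices A. \<exists>e\<in>#M. e > 0)"

end

theory Submission
  imports Defs
begin

text \<open>
  If P has normal rank 1, all its 2 x 2 minors vanish; for a nonzero pivot c = P i0 j0 this
  reads c P i j = P i j0 P i0 j. Since all entries have degree at most 1, either the whole
  column j0 or the whole row i0 consists of constant multiples of c, so P = u v(s)^T with u
  constant, or P = u(s) v^T with v constant; up to transposition, which preserves all the
  invariants involved, the first case holds.

  For P = u v(s)^T the first invariant factor is the monic gcd of the entries. If it is not
  constant it is linear and every v j is a constant multiple of it, which exhibits P also as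
  u(s) v^T. The reversal of u v(s)^T is again an outer product, hence of normal rank 1, and an
  infinite elementary divisor means that t divides each of its entries: then no entry of P
  involves s, and P is constant. Finally, if P = u(s) v^T with v constant, the right null
  space of P is the hyperplane orthogonal to v, which has a constant basis; so all column
  minimal indices vanish.
\<close>

section \<open>Polynomials of degree at most one\<close>

lemma dvd_degree_le_imp_smult:
  fixes a c :: "'a::field poly"
  assumes "c dvd a" and "degree a \<le> degree c"
  shows "\<exists>k. a = smult k c"
proof (cases "a = 0")
  case True
  then show ?thesis by (intro exI[of _ 0]) simp
next
  case False
  from assms(1) obtain r where a: "a = c * r" ..
  with False have "c \<noteq> 0" "r \<noteq> 0" by auto
  with a assms(2) have "degree r = 0" by (simp add: degree_mult_eq)
  then obtain k where "r = [:k:]" by (rule degree_eq_zeroE)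
  with a show ?thesis by auto
qed

lemma linear_poly_eq: "degree (f::'a::zero poly) \<le> 1 \<Longrightarrow> f = [:coeff f 0, coeff f 1:]"
  by (rule poly_eqI) (auto simp: coeff_pCons coeff_eq_0 split: nat.splits)

lemma monic_dvd_antisym:
  fixes d e :: "'a::field poly"
  assumes "lead_coeff d = 1" "lead_coeff e = 1" "d dvd e" "e dvd d"
  shows "d = e"
proof -
  have "d \<noteq> 0" "e \<noteq> 0" using assms(1,2) by auto
  then have "degree e \<le> degree d" using assms(4) dvd_imp_degree_le by blast
  then obtain k where "e = smult k d" using dvd_degree_le_imp_smult[OF assms(3)] by blast
  moreover from this have "k = 1" using assms(1,2) by (cases "k = 0") (simp_all add: lead_coeff_smult)
  ultimately show ?thesis by simp
qed

lemma monic_gcd_exists: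
  fixes S :: "'a::field poly set"
  assumes "s \<in> S" "s \<noteq> 0" "degree s \<le> 1"
  shows "\<exists>d. lead_coeff d = 1 \<and> (\<forall>m\<in>S. d dvd m) \<and> (\<forall>e. (\<forall>m\<in>S. e dvd m) \<longrightarrow> e dvd d)"
proof (cases "\<exists>e. degree e > 0 \<and> (\<forall>m\<in>S. e dvd m)")
  case True
  then obtain e where e: "degree e > 0" "\<forall>m\<in>S. e dvd m" by blast
  then have "e dvd s" using assms(1) by blast
  moreover have "degree s \<le> degree e" using assms(3) e(1) by linarith
  ultimately obtain k where k: "s = smult k e" using dvd_degree_le_imp_smult by blast
  define d where "d = smult (inverse (lead_coeff e)) e"
  have "e \<noteq> 0" using e(1) by auto
  then have "lead_coeff d = 1" by (simp add: d_def lead_coeff_smult)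
  moreover have "d dvd m" if "m \<in> S" for m
    using e(2) that \<open>e \<noteq> 0\<close> by (simp add: d_def smult_dvd_iff)
  moreover have "e' dvd d" if "\<forall>m\<in>S. e' dvd m" for e'
  proof -
    have "e' dvd smult k e" using that assms(1) k by blast
    moreover have "k \<noteq> 0" using k assms(2) by auto
    ultimately have "e' dvd e" by (rule dvd_smult_cancel)
    then show ?thesis by (simp add: d_def dvd_smult)
  qed
  ultimately show ?thesis by blast
next
  case False
  have "e dvd 1" if "\<forall>m\<in>S. e dvd m" for e
  proof -
    have "e dvd s" using that assms(1) by blast
    with assms(2) have "e \<noteq> 0" by auto
    moreover have "degree e = 0" using False that by auto
    ultimately show ?thesis by (simp add: is_unit_iff_degree)
  qed
  then show ?thesis by (intro exI[of _ 1]) auto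
qed

lemma degree_le_1_factor_dichotomy:
  fixes a b c d :: "'a::field poly"
  assumes "a * b = c * d" "c \<noteq> 0"
    and "degree a \<le> 1" "degree b \<le> 1" "degree c \<le> 1" "degree d \<le> 1"
  shows "(\<exists>k. a = smult k c) \<or> (\<exists>k. b = smult k c)"
proof (cases "degree c = 0")
  case True
  then have "is_unit c" using assms(2) by (simp add: is_unit_iff_degree)
  then have "c dvd a" "c dvd b" by (simp_all add: unit_imp_dvd)
  have "degree a = 0 \<or> degree b = 0"
  proof (cases "a = 0 \<or> b = 0")
    case False
    then have "d \<noteq> 0" using assms(1) by auto
    with False have "degree a + degree b = degree d"
      using assms(1,2) True by (metis add_0 degree_mult_eq)
    then show ?thesis using assms(6) by linarith
  qed auto
  then have "degree a \<le> degree c \<or> degree b \<le> degree c" using True by simp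
  then show ?thesis using dvd_degree_le_imp_smult \<open>c dvd a\<close> \<open>c dvd b\<close> by blast
next
  case False
  then have c1: "degree c = 1" using assms(5) by simp
  define r where "r = - coeff c 0 / coeff c 1"
  have "coeff c 1 \<noteq> 0" using c1 assms(2) by (metis leading_coeff_0_iff)
  then have "poly c r = 0" using c1 by (simp add: r_def poly_altdef)
  have root_dvd: "c dvd f" if "poly f r = 0" for f
  proof -
    have "[:-r, 1:] dvd c" "[:-r, 1:] dvd f"
      using \<open>poly c r = 0\<close> that by (simp_all add: poly_eq_0_iff_dvd)
    moreover have "degree c \<le> degree [:-r, 1:]" using c1 by simp
    ultimately obtain k where "c = smult k [:-r, 1:]" using dvd_degree_le_imp_smult by blast
    with assms(2) have "[:-r, 1:] = smult (inverse k) c" by (cases "k = 0") auto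
    then have "c dvd [:-r, 1:]" by (simp add: dvd_smult)
    then show ?thesis using \<open>[:-r, 1:] dvd f\<close> by (rule dvd_trans)
  qed
  have "poly a r * poly b r = poly c r * poly d r"
    using arg_cong[OF assms(1), of "\<lambda>f. poly f r"] by simp
  then have "c dvd a \<or> c dvd b" using \<open>poly c r = 0\<close> root_dvd by auto
  moreover have "degree a \<le> degree c" "degree b \<le> degree c" using c1 assms(3,4) by simp_all
  ultimately show ?thesis using dvd_degree_le_imp_smult by blast
qed

section \<open>Minors and normal rank\<close>

lemma submatrix_carrier_mat:
  assumes "I \<subseteq> {..<dim_row A}" "J \<subseteq> {..<dim_col A}"
  shows "submatrix A I J \<in> carrier_mat (card I) (card J)"
proof (rule carrier_matI)
  have "{i. i < dim_row A \<and> i \<in> I} = I" "{j. j < dim_col A \<and> j \<in> J} = J" using assms by auto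
  then show "dim_row (submatrix A I J) = card I" "dim_col (submatrix A I J) = card J"
    by (simp_all only: dim_submatrix)
qed

lemma minors_0: "minors A 0 = {1}"
proof -
  have "submatrix A {} {} \<in> carrier_mat 0 0" using submatrix_carrier_mat[of "{}" A "{}"] by simp
  then have "det (submatrix A {} {}) = 1" by simp
  moreover have "card I = 0 \<longleftrightarrow> I = {}" if "I \<subseteq> {..<n}" for I :: "nat set" and n
    using that finite_subset by fastforce
  ultimately show ?thesis unfolding minors_def by (auto intro!: exI[of _ "{}"])
qed

lemma det_submatrix_singleton:
  assumes "i < dim_row A" "j < dim_col A"
  shows "det (submatrix A {i} {j}) = A $$ (i,j)"
proof -
  have "submatrix A {i} {j} \<in> carrier_mat 1 1"
    using submatrix_carrier_mat[of "{i}" A "{j}"] assms by simp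
  moreover have pos: "{a\<in>{i}. a < i} = {}" "{b\<in>{j}. b < j} = {}" by auto
  have "submatrix A {i} {j} $$ (0, 0) = A $$ (i,j)"
    using submatrix_index_card[of i A j "{i}" "{j}"] assms unfolding pos by simp
  ultimately show ?thesis by (simp add: det_single)
qed

lemma minors_1: "minors A 1 = {A $$ (i,j) | i j. i < dim_row A \<and> j < dim_col A}"
proof
  show "minors A 1 \<subseteq> {A $$ (i,j) | i j. i < dim_row A \<and> j < dim_col A}"
  proof
    fix m assume "m \<in> minors A 1"
    then obtain I J where m: "m = det (submatrix A I J)"
      and IJ: "I \<subseteq> {..<dim_row A}" "J \<subseteq> {..<dim_col A}" "card I = 1" "card J = 1"
      unfolding minors_def by blast
    then obtain i j where "I = {i}" "J = {j}" by (auto simp: card_1_singleton_iff)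
    with m IJ have "m = A $$ (i,j)" "i < dim_row A" "j < dim_col A"
      by (simp_all add: det_submatrix_singleton)
    then show "m \<in> {A $$ (i,j) | i j. i < dim_row A \<and> j < dim_col A}" by blast
  qed
  show "{A $$ (i,j) | i j. i < dim_row A \<and> j < dim_col A} \<subseteq> minors A 1"
  proof clarify
    fix i j assume ij: "i < dim_row A" "j < dim_col A"
    then have "A $$ (i,j) = det (submatrix A {i} {j})" by (simp add: det_submatrix_singleton)
    then show "A $$ (i,j) \<in> minors A 1" unfolding minors_def using ij by force
  qed
qed

lemma det_2x2:
  assumes "A \<in> carrier_mat 2 2"
  shows "det A = A $$ (0,0) * A $$ (1,1) - A $$ (0,1) * A $$ (1,0)"
proof -
  have "det A = (\<Sum>j<2. A $$ (0,j) * cofactor A 0 j)"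
    using laplace_expansion_row[OF assms, of 0] by simp
  also have "\<dots> = A $$ (0,0) * cofactor A 0 0 + A $$ (0,1) * cofactor A 0 1"
    by (simp add: numeral_2_eq_2)
  also have "cofactor A 0 0 = A $$ (1,1)"
    using assms by (simp add: cofactor_def det_single mat_delete_def)
  also have "cofactor A 0 1 = - A $$ (1,0)"
    using assms by (simp add: cofactor_def det_single mat_delete_def)
  finally show ?thesis by (simp add: algebra_simps)
qed

lemma minors_2_mem:
  assumes "i < k" "k < dim_row A" "j < l" "l < dim_col A"
  shows "A $$ (i,j) * A $$ (k,l) - A $$ (i,l) * A $$ (k,j) \<in> minors A 2"
proof -
  let ?M = "submatrix A {i,k} {j,l}"
  have sub: "{i,k} \<subseteq> {..<dim_row A}" "{j,l} \<subseteq> {..<dim_col A}" "card {i,k} = 2" "card {j,l} = 2"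
    using assms by auto
  then have M: "?M \<in> carrier_mat 2 2" using submatrix_carrier_mat by metis
  have pos: "{a\<in>{i,k}. a < i} = {}" "{a\<in>{i,k}. a < k} = {i}"
    "{b\<in>{j,l}. b < j} = {}" "{b\<in>{j,l}. b < l} = {j}"
    using assms by auto
  have "?M $$ (0,0) = A $$ (i,j)" using submatrix_index_card[of i A j "{i,k}" "{j,l}"] assms
    unfolding pos by simp
  moreover have "?M $$ (0,1) = A $$ (i,l)" using submatrix_index_card[of i A l "{i,k}" "{j,l}"] assms
    unfolding pos by simp
  moreover have "?M $$ (1,0) = A $$ (k,j)" using submatrix_index_card[of k A j "{i,k}" "{j,l}"] assms
    unfolding pos by simp
  moreover have "?M $$ (1,1) = A $$ (k,l)" using submatrix_index_card[of k A l "{i,k}" "{j,l}"] assms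
    unfolding pos by simp
  ultimately have "A $$ (i,j) * A $$ (k,l) - A $$ (i,l) * A $$ (k,j) = det ?M"
    by (simp add: det_2x2[OF M])
  then show ?thesis unfolding minors_def using sub by blast
qed

lemma minors_2_zero_cross_mult:
  assumes "minors A 2 \<subseteq> {0}" "i < dim_row A" "k < dim_row A" "j < dim_col A" "l < dim_col A"
  shows "A $$ (i,j) * A $$ (k,l) = A $$ (i,l) * A $$ (k,j)"
proof -
  have rel: "A $$ (i',j') * A $$ (k',l') = A $$ (i',l') * A $$ (k',j')"
    if "i' < k'" "k' < dim_row A" "j' < l'" "l' < dim_col A" for i' j' k' l'
    using minors_2_mem[OF that] assms(1) by auto
  consider "i = k \<or> j = l" | "i < k" "j < l" | "i < k" "l < j" | "k < i" "j < l" | "k < i" "l < j"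
    by linarith
  then show ?thesis
  proof cases
    case 1
    then show ?thesis by (metis mult.commute)
  next
    case 2
    then show ?thesis using rel[of i k j l] assms by blast
  next
    case 3
    then show ?thesis using rel[of i k l j] assms by metis
  next
    case 4
    then show ?thesis using rel[of k i j l] assms by (metis mult.commute)
  next
    case 5
    then show ?thesis using rel[of k i l j] assms by (metis mult.commute)
  qed
qed

lemma det_product_entries_eq_0:
  fixes M :: "'a::comm_ring_1 mat"
  assumes M: "M \<in> carrier_mat n n" and "2 \<le> n"
    and entries: "\<And>a b. a < n \<Longrightarrow> b < n \<Longrightarrow> M $$ (a,b) = f a * g b"
  shows "det M = 0"
proof -
  define F where "F = mat n n (\<lambda>(a,b). if b = 0 then f a else 0)"
  define G where "G = mat n n (\<lambda>(a,b). if a = 0 then g b else 0)"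
  have "M = F * G"
  proof (rule eq_matI)
    fix a b assume "a < dim_row (F * G)" "b < dim_col (F * G)"
    then have ab: "a < n" "b < n" by (simp_all add: F_def G_def)
    have "(F * G) $$ (a,b) = (\<Sum>c\<in>{0..<n}. (if c = 0 then f a else 0) * (if c = 0 then g b else 0))"
      using ab by (simp add: F_def G_def scalar_prod_def)
    also have "\<dots> = (\<Sum>c\<in>{0..<n}. if c = 0 then f a * g b else 0)"
      by (rule sum.cong) auto
    also have "\<dots> = f a * g b" using ab by simp
    finally show "M $$ (a,b) = (F * G) $$ (a,b)" using entries ab by simp
  qed (use M in \<open>simp_all add: F_def G_def\<close>)
  moreover have "det G = 0"
  proof -
    have "upper_triangular G" by (simp add: upper_triangular_def G_def)
    then have "det G = prod_list (diag_mat G)" by (rule det_upper_triangular[of _ n]) (simp add: G_def)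
    moreover have "1 < length (diag_mat G)" "diag_mat G ! 1 = 0"
      using \<open>2 \<le> n\<close> by (simp_all add: diag_mat_def G_def)
    then have "0 \<in> set (diag_mat G)" by (metis nth_mem)
    ultimately show ?thesis
      by (metis in_set_conv_decomp prod_list.append prod_list.Cons mult_zero_left mult_zero_right)
  qed
  ultimately show ?thesis using det_mult[of F n G] by (simp add: F_def G_def)
qed

lemma minors_product_entries:
  fixes A :: "'a::comm_ring_1 mat"
  assumes entries: "\<And>i j. i < dim_row A \<Longrightarrow> j < dim_col A \<Longrightarrow> A $$ (i,j) = x i * y j"
    and "2 \<le> k"
  shows "minors A k \<subseteq> {0}"
proof
  fix m assume "m \<in> minors A k"
  then obtain I J where m: "m = det (submatrix A I J)" and IJ: "I \<subseteq> {..<dim_row A}"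
    "J \<subseteq> {..<dim_col A}" "card I = k" "card J = k" unfolding minors_def by blast
  have "submatrix A I J \<in> carrier_mat k k" using submatrix_carrier_mat[OF IJ(1,2)] IJ(3,4) by simp
  then have "det (submatrix A I J) = 0"
  proof (rule det_product_entries_eq_0[OF _ \<open>2 \<le> k\<close>])
    fix a b assume ab: "a < k" "b < k"
    have "{i. i < dim_row A \<and> i \<in> I} = I" "{j. j < dim_col A \<and> j \<in> J} = J" using IJ by auto
    then have "submatrix A I J $$ (a,b) = A $$ (pick I a, pick J b)"
      using ab IJ by (simp add: submatrix_index)
    moreover have "pick I a \<in> I" "pick J b \<in> J" using pick_in_set_le ab IJ by auto
    ultimately show "submatrix A I J $$ (a,b) = x (pick I a) * y (pick J b)" using entries IJ by auto
  qed
  then show "m \<in> {0}" using m by simp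
qed

lemma finite_nonzero_minor_sizes: "finite {k. \<exists>m\<in>minors A k. m \<noteq> 0}"
proof (rule finite_subset)
  show "{k. \<exists>m\<in>minors A k. m \<noteq> 0} \<subseteq> {..dim_row A}"
    unfolding minors_def using card_mono[OF finite_lessThan] by fastforce
qed simp

lemma le_normal_rank:
  assumes "m \<in> minors A k" "m \<noteq> 0"
  shows "k \<le> normal_rank A"
  unfolding normal_rank_def using assms finite_nonzero_minor_sizes by (auto intro: Max_ge)

lemma normal_rank_minor: "\<exists>m\<in>minors A (normal_rank A). m \<noteq> 0"
proof -
  have "0 \<in> {k. \<exists>m\<in>minors A k. m \<noteq> 0}" by (simp add: minors_0)
  then show ?thesis unfolding normal_rank_def using Max_in[OF finite_nonzero_minor_sizes] by blast
qed

lemma normal_rank_le_1_if_product_entries: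
  fixes A :: "'a::field poly mat"
  assumes "\<And>i j. i < dim_row A \<Longrightarrow> j < dim_col A \<Longrightarrow> A $$ (i,j) = x i * y j"
  shows "normal_rank A \<le> 1"
proof (rule ccontr)
  assume "\<not> normal_rank A \<le> 1"
  then have "minors A (normal_rank A) \<subseteq> {0}" using minors_product_entries[OF assms] by simp
  then show False using normal_rank_minor[of A] by blast
qed

lemma submatrix_transpose:
  assumes "I \<subseteq> {..<dim_col A}" "J \<subseteq> {..<dim_row A}"
  shows "submatrix (transpose_mat A) I J = transpose_mat (submatrix A J I)"
proof -
  have "{i. i < dim_col A \<and> i \<in> I} = I" "{j. j < dim_row A \<and> j \<in> J} = J" using assms by auto
  moreover have "pick I i < dim_col A" if "i < card I" for i
    using pick_in_set_le[OF that] assms(1) by auto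
  moreover have "pick J j < dim_row A" if "j < card J" for j
    using pick_in_set_le[OF that] assms(2) by auto
  ultimately show ?thesis by (intro eq_matI) (auto simp: submatrix_def)
qed

lemma minors_transpose: "minors (transpose_mat A) k = minors A k"
proof -
  have sub: "minors (transpose_mat B) k \<subseteq> minors B k" for B :: "'b::comm_ring_1 mat"
  proof
    fix m assume "m \<in> minors (transpose_mat B) k"
    then obtain I J where m: "m = det (submatrix (transpose_mat B) I J)"
      and IJ: "I \<subseteq> {..<dim_col B}" "J \<subseteq> {..<dim_row B}" "card I = k" "card J = k"
      unfolding minors_def by auto
    then have "m = det (submatrix B J I)"
      using submatrix_carrier_mat[of J B I] by (simp add: submatrix_transpose det_transpose)
    then show "m \<in> minors B k" unfolding minors_def using IJ by blast
  qed
  show ?thesis using sub[of A] sub[of "transpose_mat A"] by simp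
qed

lemma det_divisor_eqI:
  fixes A :: "'a::field poly mat"
  assumes "\<not> minors A k \<subseteq> {0}" "lead_coeff d = 1" "\<forall>m\<in>minors A k. d dvd m"
    "\<forall>e. (\<forall>m\<in>minors A k. e dvd m) \<longrightarrow> e dvd d"
  shows "det_divisor A k = d"
  unfolding det_divisor_def using assms by (auto intro!: the_equality monic_dvd_antisym)

lemma invariant_factor_1: "invariant_factor A 1 = det_divisor A 1"
proof -
  have "det_divisor A 0 = 1" by (rule det_divisor_eqI) (auto simp: minors_0)
  then show ?thesis by (simp add: invariant_factor_def)
qed

lemma invariant_factor_1_dvd_entry:
  fixes A :: "'a::field poly mat"
  assumes "is_pencil A" "normal_rank A = 1" "i < dim_row A" "j < dim_col A"
  shows "invariant_factor A 1 dvd A $$ (i,j)"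
proof -
  obtain s where s: "s \<in> minors A 1" "s \<noteq> 0" using normal_rank_minor[of A] assms(2) by auto
  moreover have "degree s \<le> 1" using s(1) assms(1) unfolding minors_1 is_pencil_def by auto
  ultimately obtain d where d: "lead_coeff d = 1" "\<forall>m\<in>minors A 1. d dvd m"
    "\<forall>e. (\<forall>m\<in>minors A 1. e dvd m) \<longrightarrow> e dvd d"
    using monic_gcd_exists by blast
  then have "invariant_factor A 1 = d" unfolding invariant_factor_1 using s by (intro det_divisor_eqI) auto
  moreover have "A $$ (i,j) \<in> minors A 1" unfolding minors_1 using assms(3,4) by blast
  ultimately show ?thesis using d(2) by simp
qed

lemma normal_rank_transpose: "normal_rank (transpose_mat A) = normal_rank A"
  by (simp add: normal_rank_def minors_transpose)

lemma invariant_factor_transpose: "invariant_factor (transpose_mat A) k = invariant_factor A k"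
  by (simp add: invariant_factor_def det_divisor_def minors_transpose)

lemma has_nontrivial_invariant_factor_transpose:
  "has_nontrivial_invariant_factor (transpose_mat A) \<longleftrightarrow> has_nontrivial_invariant_factor A"
  by (simp add: has_nontrivial_invariant_factor_def normal_rank_transpose invariant_factor_transpose)

lemma rev_pencil_transpose: "rev_pencil (transpose_mat A) = transpose_mat (rev_pencil A)"
  by (rule eq_matI) (auto simp: rev_pencil_def)

lemma has_infinite_elementary_divisor_transpose:
  "has_infinite_elementary_divisor (transpose_mat A) \<longleftrightarrow> has_infinite_elementary_divisor A"
  by (simp add: has_infinite_elementary_divisor_def rev_pencil_transpose normal_rank_transpose
      invariant_factor_transpose)

lemma has_pos_row_minimal_index_iff_transpose:
  "has_pos_row_minimal_index A \<longleftrightarrow> has_pos_column_minimal_index (transpose_mat A)"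
  by (simp add: has_pos_row_minimal_index_def has_pos_column_minimal_index_def row_minimal_indices_def)

lemma is_pencil_transpose: "is_pencil (transpose_mat A) \<longleftrightarrow> is_pencil A"
  by (auto simp: is_pencil_def)

section \<open>Factorizations of rank-one pencils\<close>

definition const_pencil_factorization :: "'a::field poly mat \<Rightarrow> bool" where
  "const_pencil_factorization P \<longleftrightarrow> (\<exists>u v. u \<in> carrier_vec (dim_row P) \<and> u \<noteq> 0\<^sub>v (dim_row P) \<and>
     v \<in> carrier_vec (dim_col P) \<and> is_vec_pencil v \<and> v \<noteq> 0\<^sub>v (dim_col P) \<and>
     P = outer (const_vec u) v)"

definition pencil_const_factorization :: "'a::field poly mat \<Rightarrow> bool" where
  "pencil_const_factorization P \<longleftrightarrow> (\<exists>u v. v \<in> carrier_vec (dim_col P) \<and> v \<noteq> 0\<^sub>v (dim_col P) \<and>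
     u \<in> carrier_vec (dim_row P) \<and> is_vec_pencil u \<and> u \<noteq> 0\<^sub>v (dim_row P) \<and>
     P = outer u (const_vec v))"

definition const_const_factorization :: "'a::field poly mat \<Rightarrow> bool" where
  "const_const_factorization P \<longleftrightarrow> (\<exists>u v. u \<in> carrier_vec (dim_row P) \<and> u \<noteq> 0\<^sub>v (dim_row P) \<and>
     v \<in> carrier_vec (dim_col P) \<and> v \<noteq> 0\<^sub>v (dim_col P) \<and> P = outer (const_vec u) (const_vec v))"

lemma transpose_outer: "transpose_mat (outer x y) = outer y (x :: 'a::comm_ring_1 vec)"
  by (rule eq_matI) (auto simp: outer_def mult.commute)

lemma transpose_eq_outer_iff: "transpose_mat A = outer x y \<longleftrightarrow> A = outer y (x :: 'a::comm_ring_1 vec)"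
  by (metis transpose_outer transpose_transpose)

lemma const_pencil_factorization_transpose:
  "const_pencil_factorization (transpose_mat P) \<longleftrightarrow> pencil_const_factorization P"
  unfolding const_pencil_factorization_def pencil_const_factorization_def transpose_eq_outer_iff
  by auto

lemma pencil_const_factorization_transpose:
  "pencil_const_factorization (transpose_mat P) \<longleftrightarrow> const_pencil_factorization P"
  using const_pencil_factorization_transpose[of "transpose_mat P"] by simp

lemma const_const_factorization_transpose:
  "const_const_factorization (transpose_mat P) \<longleftrightarrow> const_const_factorization P"
  unfolding const_const_factorization_def transpose_eq_outer_iff by auto

lemma vec_neq_zero_iff: "x \<in> carrier_vec n \<Longrightarrow> x \<noteq> 0\<^sub>v n \<longleftrightarrow> (\<exists>i<n. x $ i \<noteq> 0)"
  by (auto intro!: eq_vecI)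

lemma index_outer_const_vec:
  "i < dim_vec x \<Longrightarrow> j < dim_vec y \<Longrightarrow> outer (const_vec x) y $$ (i,j) = smult (x $ i) (y $ j)"
  by (simp add: outer_def const_vec_def)

lemma const_pencil_factorization_iff:
  "const_pencil_factorization P \<longleftrightarrow>
    (\<exists>u v. (\<exists>i<dim_row P. u i \<noteq> 0) \<and> (\<exists>j<dim_col P. v j \<noteq> 0) \<and>
      (\<forall>j<dim_col P. degree (v j) \<le> 1) \<and>
      (\<forall>i<dim_row P. \<forall>j<dim_col P. P $$ (i,j) = smult (u i) (v j)))"
proof
  assume "const_pencil_factorization P"
  then obtain u v where "u \<in> carrier_vec (dim_row P)" "u \<noteq> 0\<^sub>v (dim_row P)"
    "v \<in> carrier_vec (dim_col P)" "is_vec_pencil v" "v \<noteq> 0\<^sub>v (dim_col P)"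
    "P = outer (const_vec u) v"
    unfolding const_pencil_factorization_def by blast
  then show "\<exists>u v. (\<exists>i<dim_row P. u i \<noteq> 0) \<and> (\<exists>j<dim_col P. v j \<noteq> 0) \<and>
      (\<forall>j<dim_col P. degree (v j) \<le> 1) \<and>
      (\<forall>i<dim_row P. \<forall>j<dim_col P. P $$ (i,j) = smult (u i) (v j))"
    by (intro exI[of _ "($) u"] exI[of _ "($) v"])
      (auto simp: vec_neq_zero_iff is_vec_pencil_def index_outer_const_vec)
next
  assume "\<exists>u v. (\<exists>i<dim_row P. u i \<noteq> 0) \<and> (\<exists>j<dim_col P. v j \<noteq> 0) \<and>
      (\<forall>j<dim_col P. degree (v j) \<le> 1) \<and>
      (\<forall>i<dim_row P. \<forall>j<dim_col P. P $$ (i,j) = smult (u i) (v j))"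
  then obtain u v where uv: "\<exists>i<dim_row P. u i \<noteq> 0" "\<exists>j<dim_col P. v j \<noteq> 0"
    "\<forall>j<dim_col P. degree (v j) \<le> 1" "\<forall>i<dim_row P. \<forall>j<dim_col P. P $$ (i,j) = smult (u i) (v j)"
    by blast
  have "P = outer (const_vec (vec (dim_row P) u)) (vec (dim_col P) v)"
    using uv(4) by (intro eq_matI) (auto simp: outer_def const_vec_def)
  with uv(1-3) show "const_pencil_factorization P"
    unfolding const_pencil_factorization_def
    by (intro exI[of _ "vec (dim_row P) u"] exI[of _ "vec (dim_col P) v"])
      (auto simp: vec_neq_zero_iff is_vec_pencil_def)
qed

lemma const_pencil_factorization_of_column_multiples:
  assumes pen: "is_pencil P" and rk: "minors P 2 \<subseteq> {0}"
    and ij0: "i0 < dim_row P" "j0 < dim_col P" "P $$ (i0,j0) \<noteq> 0"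
    and col: "\<forall>i<dim_row P. \<exists>k. P $$ (i,j0) = smult k (P $$ (i0,j0))"
  shows "const_pencil_factorization P"
proof -
  let ?c = "P $$ (i0,j0)"
  obtain K where K: "\<forall>i<dim_row P. P $$ (i,j0) = smult (K i) ?c" using col by metis
  have entries: "P $$ (i,j) = smult (K i) (P $$ (i0,j))" if "i < dim_row P" "j < dim_col P" for i j
  proof -
    have "?c * P $$ (i,j) = P $$ (i,j0) * P $$ (i0,j)"
      using minors_2_zero_cross_mult[OF rk that(1) ij0(1) that(2) ij0(2)] by (simp add: mult.commute)
    also have "\<dots> = ?c * smult (K i) (P $$ (i0,j))" using K that(1) by (simp add: mult.commute)
    finally show ?thesis using mult_left_cancel[OF ij0(3)] by blast
  qed
  have "?c = smult (K i0) ?c" using K ij0(1) by blast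
  then have "K i0 \<noteq> 0" using ij0(3) by auto
  show ?thesis unfolding const_pencil_factorization_iff
  proof (intro exI[of _ K] exI[of _ "\<lambda>j. P $$ (i0,j)"] conjI)
    show "\<exists>i<dim_row P. K i \<noteq> 0" using ij0(1) \<open>K i0 \<noteq> 0\<close> by blast
    show "\<exists>j<dim_col P. P $$ (i0,j) \<noteq> 0" using ij0 by blast
    show "\<forall>j<dim_col P. degree (P $$ (i0,j)) \<le> 1" using pen ij0(1) unfolding is_pencil_def by blast
    show "\<forall>i<dim_row P. \<forall>j<dim_col P. P $$ (i,j) = smult (K i) (P $$ (i0,j))" using entries by blast
  qed
qed

lemma rank_one_pencil_factorization_cases:
  assumes pen: "is_pencil P" and rk: "normal_rank P = 1"
  shows "const_pencil_factorization P \<or> pencil_const_factorization P"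
proof -
  have minors2: "minors P 2 \<subseteq> {0}" using le_normal_rank[of _ P 2] rk by fastforce
  have "\<exists>m\<in>minors P 1. m \<noteq> 0" using normal_rank_minor[of P] rk by simp
  then obtain i0 j0 where ij0: "i0 < dim_row P" "j0 < dim_col P" "P $$ (i0,j0) \<noteq> 0"
    unfolding minors_1 by blast
  have deg: "degree (P $$ (i,j)) \<le> 1" if "i < dim_row P" "j < dim_col P" for i j
    using pen that by (simp add: is_pencil_def)
  have "(\<exists>k. P $$ (i,j0) = smult k (P $$ (i0,j0))) \<or> (\<exists>k. P $$ (i0,j) = smult k (P $$ (i0,j0)))"
    if "i < dim_row P" "j < dim_col P" for i j
  proof (rule degree_le_1_factor_dichotomy)
    show "P $$ (i,j0) * P $$ (i0,j) = P $$ (i0,j0) * P $$ (i,j)"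
      using minors_2_zero_cross_mult[OF minors2 that(1) ij0(1) that(2) ij0(2)] by (simp add: mult.commute)
  qed (use ij0 deg that in auto)
  then consider "\<forall>i<dim_row P. \<exists>k. P $$ (i,j0) = smult k (P $$ (i0,j0))"
    | "\<forall>j<dim_col P. \<exists>k. P $$ (i0,j) = smult k (P $$ (i0,j0))"
    by blast
  then show ?thesis
  proof cases
    case 1
    then show ?thesis using const_pencil_factorization_of_column_multiples[OF pen minors2 ij0] by blast
  next
    case 2
    have "const_pencil_factorization (transpose_mat P)"
      by (rule const_pencil_factorization_of_column_multiples[of _ j0 i0])
        (use pen minors2 ij0 2 in \<open>simp_all add: is_pencil_transpose minors_transpose\<close>)
    then show ?thesis by (simp add: const_pencil_factorization_transpose)
  qed
qed

lemma pencil_const_factorization_if_common_divisor: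
  assumes fac: "const_pencil_factorization P" and d: "0 < degree d"
    and dvd: "\<And>i j. i < dim_row P \<Longrightarrow> j < dim_col P \<Longrightarrow> d dvd P $$ (i,j)"
  shows "pencil_const_factorization P"
proof -
  obtain u v where i0: "\<exists>i0<dim_row P. u i0 \<noteq> 0" and j0: "\<exists>j0<dim_col P. v j0 \<noteq> 0"
    and deg: "\<forall>j<dim_col P. degree (v j) \<le> 1"
    and P: "\<forall>i<dim_row P. \<forall>j<dim_col P. P $$ (i,j) = smult (u i) (v j)"
    using fac unfolding const_pencil_factorization_iff by blast
  obtain i0 where "i0 < dim_row P" "u i0 \<noteq> 0" using i0 by blast
  then have dvd_v: "d dvd v j" if "j < dim_col P" for j
    using dvd[of i0 j] P that by (auto intro: dvd_smult_cancel)
  obtain j0 where "j0 < dim_col P" "v j0 \<noteq> 0" using j0 by blast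
  then have "degree d \<le> 1" using dvd_imp_degree_le[OF dvd_v] deg by fastforce
  have "\<exists>k. v j = smult k d" if "j < dim_col P" for j
  proof (rule dvd_degree_le_imp_smult)
    show "d dvd v j" using dvd_v[OF that] .
    show "degree (v j) \<le> degree d" using deg that d by fastforce
  qed
  then obtain w where w: "\<forall>j<dim_col P. v j = smult (w j) d" by metis
  show ?thesis unfolding const_pencil_factorization_transpose[symmetric] const_pencil_factorization_iff
  proof (intro exI[of _ w] exI[of _ "\<lambda>i. smult (u i) d"] conjI)
    show "\<exists>j<dim_row (transpose_mat P). w j \<noteq> 0" using j0 w by fastforce
    show "\<exists>i<dim_col (transpose_mat P). smult (u i) d \<noteq> 0" using i0 d by fastforce
    show "\<forall>i<dim_col (transpose_mat P). degree (smult (u i) d) \<le> 1"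
      using \<open>degree d \<le> 1\<close> by simp
    show "\<forall>j<dim_row (transpose_mat P). \<forall>i<dim_col (transpose_mat P).
        transpose_mat P $$ (j,i) = smult (w j) (smult (u i) d)"
      using P w by (simp add: mult.commute)
  qed
qed

lemma const_vec_eq_0_iff: "const_vec x = 0\<^sub>v n \<longleftrightarrow> x = 0\<^sub>v n"
  unfolding const_vec_def vec_eq_iff by auto

lemma const_const_factorization_if_coeff_1_eq_0:
  assumes fac: "const_pencil_factorization P"
    and c1: "\<And>i j. i < dim_row P \<Longrightarrow> j < dim_col P \<Longrightarrow> coeff (P $$ (i,j)) 1 = 0"
  shows "const_const_factorization P"
proof -
  obtain u v where u: "u \<in> carrier_vec (dim_row P)" "u \<noteq> 0\<^sub>v (dim_row P)"
    and v: "v \<in> carrier_vec (dim_col P)" "is_vec_pencil v" "v \<noteq> 0\<^sub>v (dim_col P)"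
    and P: "P = outer (const_vec u) v"
    using fac unfolding const_pencil_factorization_def by blast
  obtain i0 where i0: "i0 < dim_row P" "u $ i0 \<noteq> 0" using u vec_neq_zero_iff by blast
  define w where "w = map_vec (\<lambda>f. coeff f 0) v"
  have "v = const_vec w"
  proof (rule eq_vecI)
    fix j assume "j < dim_vec (const_vec w)"
    then have j: "j < dim_col P" using v by (simp add: w_def const_vec_def)
    have "u $ i0 * coeff (v $ j) 1 = 0"
      using c1[OF i0(1) j] i0(1) j u v by (simp add: P index_outer_const_vec)
    then have "coeff (v $ j) 1 = 0" using i0(2) by simp
    moreover have "degree (v $ j) \<le> 1" using v j by (simp add: is_vec_pencil_def)
    ultimately show "v $ j = const_vec w $ j"
      using linear_poly_eq[of "v $ j"] j v by (simp add: w_def const_vec_def)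
  qed (simp add: w_def const_vec_def)
  show ?thesis unfolding const_const_factorization_def
  proof (rule exI[of _ u], rule exI[of _ w], intro conjI)
    show "w \<in> carrier_vec (dim_col P)" using v by (simp add: w_def)
    show "w \<noteq> 0\<^sub>v (dim_col P)" using v \<open>v = const_vec w\<close> const_vec_eq_0_iff by metis
    show "P = outer (const_vec u) (const_vec w)" using P \<open>v = const_vec w\<close> by simp
  qed (use u in auto)
qed

lemma const_const_factorization_if_infinite_elementary_divisor:
  assumes fac: "const_pencil_factorization P" and ied: "has_infinite_elementary_divisor P"
  shows "const_const_factorization P"
proof -
  define R where "R = rev_pencil P"
  have dims: "dim_row R = dim_row P" "dim_col R = dim_col P" by (simp_all add: R_def rev_pencil_def)
  have R: "R $$ (i,j) = [:coeff (P $$ (i,j)) 1, coeff (P $$ (i,j)) 0:]"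
    if "i < dim_row P" "j < dim_col P" for i j
    using that by (simp add: R_def rev_pencil_def)
  obtain u v where P: "\<forall>i<dim_row P. \<forall>j<dim_col P. P $$ (i,j) = smult (u i) (v j)"
    using fac unfolding const_pencil_factorization_iff by blast
  have "normal_rank R \<le> 1"
    by (rule normal_rank_le_1_if_product_entries[where x = "\<lambda>i. [:u i:]"
          and y = "\<lambda>j. [:coeff (v j) 1, coeff (v j) 0:]"]) (use P R dims in simp)
  moreover obtain k where k: "k \<in> {1..normal_rank R}" "[:0, 1:] dvd invariant_factor R k"
    using ied unfolding has_infinite_elementary_divisor_def R_def by blast
  ultimately have "normal_rank R = 1" "k = 1" by auto
  moreover from this have "[:0, 1:] dvd invariant_factor R 1" using k(2) by simp
  moreover have "is_pencil R" by (simp add: is_pencil_def R_def rev_pencil_def)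
  ultimately have root: "[:0, 1:] dvd R $$ (i,j)" if "i < dim_row P" "j < dim_col P" for i j
    using invariant_factor_1_dvd_entry[of R i j] that dims dvd_trans by metis
  show ?thesis
  proof (rule const_const_factorization_if_coeff_1_eq_0[OF fac])
    fix i j assume ij: "i < dim_row P" "j < dim_col P"
    have "poly (R $$ (i,j)) 0 = 0" using root[OF ij] by (simp add: dvd_iff_poly_eq_0)
    then show "coeff (P $$ (i,j)) 1 = 0" using R[OF ij] by simp
  qed
qed

section \<open>Column minimal indices of u(s) v^T\<close>

lemma vec_degree_const_vec: "vec_degree (const_vec x) = 0"
proof -
  have degrees: "insert 0 {degree (const_vec x $ i) | i. i < dim_vec (const_vec x)} = {0}"
    by (auto simp: const_vec_def)
  show ?thesis unfolding vec_degree_def degrees by simp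
qed

lemma not_has_pos_column_minimal_index_if_const_basis:
  assumes "right_null_poly_basis A xs" "\<forall>x\<in>set xs. vec_degree x = 0"
  shows "\<not> has_pos_column_minimal_index A"
proof
  assume "has_pos_column_minimal_index A"
  then obtain ys e where ys: "right_minimal_basis A ys" and e: "e \<in># mset (map vec_degree ys)" "e > 0"
    unfolding has_pos_column_minimal_index_def column_minimal_indices_def by blast
  then have "(\<Sum>y\<leftarrow>ys. vec_degree y) \<le> (\<Sum>x\<leftarrow>xs. vec_degree x)"
    using assms(1) unfolding right_minimal_basis_def by blast
  also have "\<dots> = 0" using assms(2) by (simp add: sum_list_eq_0_iff)
  finally show False using e by (auto simp: sum_list_eq_0_iff)
qed

lemma outer_mult_mat_vec:
  assumes "dim_vec z = dim_vec y"
  shows "outer x y *\<^sub>v z = (y \<bullet> z) \<cdot>\<^sub>v (x :: 'a::comm_ring_1 vec)"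
  by (rule eq_vecI) (auto simp: outer_def scalar_prod_def sum_distrib_left ac_simps assms)

lemma outer_mult_mat_vec_eq_0_iff:
  fixes u :: "'a::idom vec"
  assumes u: "u \<in> carrier_vec m" "u \<noteq> 0\<^sub>v m" and z: "dim_vec z = dim_vec y"
  shows "outer u y *\<^sub>v z = 0\<^sub>v m \<longleftrightarrow> y \<bullet> z = 0"
proof
  obtain r where r: "r < m" "u $ r \<noteq> 0" using u vec_neq_zero_iff by blast
  assume "outer u y *\<^sub>v z = 0\<^sub>v m"
  then have "(outer u y *\<^sub>v z) $ r = 0" using r by simp
  then have "(y \<bullet> z) * u $ r = 0" using outer_mult_mat_vec[OF z, of u] u r by simp
  then show "y \<bullet> z = 0" using r(2) by simp
next
  assume "y \<bullet> z = 0"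
  then show "outer u y *\<^sub>v z = 0\<^sub>v m" using outer_mult_mat_vec[OF z, of u] u by (intro eq_vecI) auto
qed

text \<open>For j \<noteq> c the vectors e j - (v j / v c) e c form a basis of the hyperplane
  orthogonal to v.\<close>

definition hyperplane_basis_vec :: "'a::field vec \<Rightarrow> nat \<Rightarrow> nat \<Rightarrow> 'a poly vec" where
  "hyperplane_basis_vec v c j =
     const_vec (vec (dim_vec v) (\<lambda>t. if t = j then 1 else if t = c then - v $ j / v $ c else 0))"

lemma index_hyperplane_basis_vec:
  "t < dim_vec v \<Longrightarrow> hyperplane_basis_vec v c j $ t =
     (if t = j then 1 else if t = c then [:- v $ j / v $ c:] else 0)"
  by (simp add: hyperplane_basis_vec_def const_vec_def)

lemma dim_hyperplane_basis_vec [simp]: "dim_vec (hyperplane_basis_vec v c j) = dim_vec v"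
  by (simp add: hyperplane_basis_vec_def const_vec_def)

lemma scalar_prod_hyperplane_basis_vec:
  assumes "j < dim_vec v" "c < dim_vec v" "j \<noteq> c" "v $ c \<noteq> 0"
  shows "const_vec v \<bullet> hyperplane_basis_vec v c j = 0"
proof -
  have "const_vec v \<bullet> hyperplane_basis_vec v c j =
      (\<Sum>t\<in>{0..<dim_vec v}. (if t = j then [:v $ j:] else 0) + (if t = c then - [:v $ j:] else 0))"
    unfolding scalar_prod_def
  proof (rule sum.cong)
    fix t assume "t \<in> {0..<dim_vec v}"
    then show "const_vec v $ t * hyperplane_basis_vec v c j $ t =
        (if t = j then [:v $ j:] else 0) + (if t = c then - [:v $ j:] else 0)"
      using assms by (auto simp: index_hyperplane_basis_vec const_vec_def)
  qed simp
  also have "\<dots> = 0" using assms by (simp add: sum.distrib)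
  finally show ?thesis .
qed

lemma lin_comb_map_distinct:
  assumes "distinct js"
  shows "lin_comb (\<lambda>i. a (js ! i)) (map b js) t = (\<Sum>j\<in>set js. a j * b j $ t)"
  unfolding lin_comb_def
  using sum.reindex_bij_betw[OF bij_betw_nth[OF assms refl refl], of "\<lambda>j. a j * b j $ t"] by simp

lemma lin_comb_hyperplane_basis_nth:
  fixes v :: "'a::field vec" and c :: nat
  defines "js \<equiv> filter (\<lambda>j. j \<noteq> c) [0..<dim_vec v]"
  assumes k: "k < length js"
  shows "lin_comb a (map (hyperplane_basis_vec v c) js) (js ! k) = a k"
proof -
  have jk: "js ! k < dim_vec v" "js ! k \<noteq> c" using nth_mem[OF k] by (auto simp: js_def)
  have "lin_comb a (map (hyperplane_basis_vec v c) js) (js ! k) = (\<Sum>i<length js. if i = k then a i else 0)"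
    unfolding lin_comb_def
  proof (rule sum.cong)
    fix i assume i: "i \<in> {..<length js}"
    have "js ! k = js ! i \<longleftrightarrow> k = i"
      using nth_eq_iff_index_eq[of js k i] k i by (simp add: js_def)
    then show "a i * (map (hyperplane_basis_vec v c) js ! i $ (js ! k)) = (if i = k then a i else 0)"
      using i jk by (auto simp: index_hyperplane_basis_vec)
  qed simp
  also have "\<dots> = a k" using k by simp
  finally show ?thesis .
qed

lemma lin_comb_hyperplane_basis_span:
  fixes v :: "'a::field vec" and c :: nat
  defines "js \<equiv> filter (\<lambda>j. j \<noteq> c) [0..<dim_vec v]"
  assumes c: "c < dim_vec v" "v $ c \<noteq> 0"
    and z: "dim_vec z = dim_vec v" "const_vec v \<bullet> z = 0" and t: "t < dim_vec v"
  shows "lin_comb (\<lambda>i. z $ (js ! i)) (map (hyperplane_basis_vec v c) js) t = z $ t"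
proof -
  let ?S = "{0..<dim_vec v} - {c}"
  have js: "distinct js" "set js = ?S" by (auto simp: js_def)
  have "lin_comb (\<lambda>i. z $ (js ! i)) (map (hyperplane_basis_vec v c) js) t =
      (\<Sum>j\<in>?S. z $ j * hyperplane_basis_vec v c j $ t)"
    using lin_comb_map_distinct[OF js(1), of "\<lambda>j. z $ j" "hyperplane_basis_vec v c" t] js(2) by simp
  also have "\<dots> = z $ t"
  proof (cases "t = c")
    case False
    then have "(\<Sum>j\<in>?S. z $ j * hyperplane_basis_vec v c j $ t) = (\<Sum>j\<in>?S. if j = t then z $ t else 0)"
      using t by (intro sum.cong) (auto simp: index_hyperplane_basis_vec)
    also have "\<dots> = z $ t" using t False by simp
    finally show ?thesis .
  next
    case True
    have "(\<Sum>j\<in>{0..<dim_vec v}. [:v $ j:] * z $ j) = 0"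
      using z by (simp add: scalar_prod_def const_vec_def)
    then have others: "(\<Sum>j\<in>?S. [:v $ j:] * z $ j) = - ([:v $ c:] * z $ c)"
      using c(1) by (simp add: sum.remove eq_neg_iff_add_eq_0 add.commute)
    have "z $ j * hyperplane_basis_vec v c j $ t = [:- inverse (v $ c):] * ([:v $ j:] * z $ j)"
      if "j \<in> ?S" for j
    proof -
      have "hyperplane_basis_vec v c j $ t = [:- inverse (v $ c) * v $ j:]"
        using that True t by (simp add: index_hyperplane_basis_vec divide_inverse mult.commute)
      then show ?thesis by (simp add: mult.commute)
    qed
    then have "(\<Sum>j\<in>?S. z $ j * hyperplane_basis_vec v c j $ t) =
        (\<Sum>j\<in>?S. [:- inverse (v $ c):] * ([:v $ j:] * z $ j))"
      by (rule sum.cong[OF refl])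
    also have "\<dots> = [:- inverse (v $ c):] * (\<Sum>j\<in>?S. [:v $ j:] * z $ j)"
      by (simp add: sum_distrib_left)
    also have "\<dots> = z $ c" using others c(2) by simp
    finally show ?thesis using True by simp
  qed
  finally show ?thesis .
qed

lemma right_null_poly_basis_hyperplane:
  fixes A :: "'a::field poly mat"
  assumes v: "v \<in> carrier_vec (dim_col A)" "c < dim_col A" "v $ c \<noteq> 0"
    and null: "\<And>z. z \<in> carrier_vec (dim_col A) \<Longrightarrow>
      A *\<^sub>v z = 0\<^sub>v (dim_row A) \<longleftrightarrow> const_vec v \<bullet> z = 0"
  shows "right_null_poly_basis A (map (hyperplane_basis_vec v c) (filter (\<lambda>j. j \<noteq> c) [0..<dim_col A]))"
proof -
  let ?js = "filter (\<lambda>j. j \<noteq> c) [0..<dim_col A]"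
  let ?xs = "map (hyperplane_basis_vec v c) ?js"
  have n: "dim_vec v = dim_col A" using v by simp
  have null_vectors: "\<forall>x\<in>set ?xs. x \<in> carrier_vec (dim_col A) \<and> A *\<^sub>v x = 0\<^sub>v (dim_row A)"
  proof
    fix x assume "x \<in> set ?xs"
    then obtain j where x: "x = hyperplane_basis_vec v c j" "j < dim_col A" "j \<noteq> c" by force
    have x_carrier: "x \<in> carrier_vec (dim_col A)" unfolding x(1) by (rule carrier_vecI) (simp add: n)
    moreover have "const_vec v \<bullet> x = 0"
      unfolding x(1) by (rule scalar_prod_hyperplane_basis_vec) (use x v n in auto)
    ultimately show "x \<in> carrier_vec (dim_col A) \<and> A *\<^sub>v x = 0\<^sub>v (dim_row A)"
      using null[OF x_carrier] by blast
  qed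
  have independent: "\<forall>a. (\<forall>t<dim_col A. lin_comb a ?xs t = 0) \<longrightarrow> (\<forall>i<length ?xs. a i = 0)"
  proof (intro allI impI)
    fix a i assume lc: "\<forall>t<dim_col A. lin_comb a ?xs t = 0" and i: "i < length ?xs"
    have "?js ! i < dim_col A" using nth_mem[of i ?js] i by auto
    then have "lin_comb a ?xs (?js ! i) = 0" using lc by blast
    then show "a i = 0" using lin_comb_hyperplane_basis_nth[where v = v and c = c and k = i and a = a] i n
      by simp
  qed
  have spanning: "\<forall>z\<in>carrier_vec (dim_col A). A *\<^sub>v z = 0\<^sub>v (dim_row A) \<longrightarrow>
      (\<exists>d a. d \<noteq> 0 \<and> (\<forall>t<dim_col A. d * z $ t = lin_comb a ?xs t))"
  proof (intro ballI impI)
    fix z assume "z \<in> carrier_vec (dim_col A)" "A *\<^sub>v z = 0\<^sub>v (dim_row A)"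
    then have "\<forall>t<dim_col A. 1 * z $ t = lin_comb (\<lambda>i. z $ (?js ! i)) ?xs t"
      using lin_comb_hyperplane_basis_span[where v = v and c = c and z = z] null[of z] v n by auto
    then show "\<exists>d a. d \<noteq> 0 \<and> (\<forall>t<dim_col A. d * z $ t = lin_comb a ?xs t)"
      using one_neq_zero by blast
  qed
  show ?thesis unfolding right_null_poly_basis_def using null_vectors independent spanning by blast
qed

lemma not_has_pos_column_minimal_index_if_pencil_const:
  assumes "pencil_const_factorization P"
  shows "\<not> has_pos_column_minimal_index P"
proof -
  obtain u v where v: "v \<in> carrier_vec (dim_col P)" "v \<noteq> 0\<^sub>v (dim_col P)"
    and u: "u \<in> carrier_vec (dim_row P)" "u \<noteq> 0\<^sub>v (dim_row P)" and P: "P = outer u (const_vec v)"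
    using assms unfolding pencil_const_factorization_def by blast
  obtain c where c: "c < dim_col P" "v $ c \<noteq> 0" using v vec_neq_zero_iff by blast
  let ?xs = "map (hyperplane_basis_vec v c) (filter (\<lambda>j. j \<noteq> c) [0..<dim_col P])"
  have "P *\<^sub>v z = 0\<^sub>v (dim_row P) \<longleftrightarrow> const_vec v \<bullet> z = 0"
    if "z \<in> carrier_vec (dim_col P)" for z
    using outer_mult_mat_vec_eq_0_iff[OF u, of z "const_vec v"] that v P by (simp add: const_vec_def)
  then have "right_null_poly_basis P ?xs" using right_null_poly_basis_hyperplane v c by blast
  moreover have "\<forall>x\<in>set ?xs. vec_degree x = 0"
    by (auto simp: hyperplane_basis_vec_def vec_degree_const_vec)
  ultimately show ?thesis by (rule not_has_pos_column_minimal_index_if_const_basis)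
qed

lemma rank_one_pencil_invariant_factorizations_if_const_pencil:
  assumes pen: "is_pencil P" and rk: "normal_rank P = 1" and fac: "const_pencil_factorization P"
  shows "(has_nontrivial_invariant_factor P \<longrightarrow>
            const_pencil_factorization P \<and> pencil_const_factorization P) \<and>
         (has_infinite_elementary_divisor P \<longrightarrow> const_const_factorization P) \<and>
         (has_pos_column_minimal_index P \<longrightarrow> const_pencil_factorization P) \<and>
         (has_pos_row_minimal_index P \<longrightarrow> pencil_const_factorization P)"
proof (intro conjI impI fac)
  assume "has_nontrivial_invariant_factor P"
  then have "0 < degree (invariant_factor P 1)"
    using rk unfolding has_nontrivial_invariant_factor_def by auto
  then show "pencil_const_factorization P"
    using fac pencil_const_factorization_if_common_divisor invariant_factor_1_dvd_entry[OF pen rk]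
    by blast
next
  assume "has_infinite_elementary_divisor P"
  then show "const_const_factorization P"
    using fac by (rule const_const_factorization_if_infinite_elementary_divisor[rotated])
next
  assume "has_pos_row_minimal_index P"
  moreover have "pencil_const_factorization (transpose_mat P)"
    using fac by (simp add: pencil_const_factorization_transpose)
  ultimately show "pencil_const_factorization P"
    using not_has_pos_column_minimal_index_if_pencil_const
    by (auto simp: has_pos_row_minimal_index_iff_transpose)
qed

lemma rank_one_pencil_invariant_factorizations:
  assumes pen: "is_pencil P" and rk: "normal_rank P = 1"
  shows "(has_nontrivial_invariant_factor P \<longrightarrow>
            const_pencil_factorization P \<and> pencil_const_factorization P) \<and>
         (has_infinite_elementary_divisor P \<longrightarrow> const_const_factorization P) \<and>
         (has_pos_column_minimal_index P \<longrightarrow> const_pencil_factorization P) \<and>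
         (has_pos_row_minimal_index P \<longrightarrow> pencil_const_factorization P)"
proof -
  consider "const_pencil_factorization P" | "const_pencil_factorization (transpose_mat P)"
    using rank_one_pencil_factorization_cases[OF pen rk] const_pencil_factorization_transpose by blast
  then show ?thesis
  proof cases
    case 1
    then show ?thesis by (rule rank_one_pencil_invariant_factorizations_if_const_pencil[OF pen rk])
  next
    case 2
    have "is_pencil (transpose_mat P)" "normal_rank (transpose_mat P) = 1"
      using pen rk by (simp_all add: is_pencil_transpose normal_rank_transpose)
    from rank_one_pencil_invariant_factorizations_if_const_pencil[OF this 2] show ?thesis
      by (auto simp: has_nontrivial_invariant_factor_transpose has_infinite_elementary_divisor_transpose
          has_pos_row_minimal_index_iff_transpose const_pencil_factorization_transpose
          pencil_const_factorization_transpose const_const_factorization_transpose)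
  qed
qed

theorem proposition2p1:
  fixes P :: "'a::field poly mat" and p q :: nat
  assumes "P \<in> carrier_mat p q" and "is_pencil P" and "normal_rank P = 1"
  shows
   "(has_nontrivial_invariant_factor P \<longrightarrow>
      (\<exists>u vb ub v. u \<in> carrier_vec p \<and> u \<noteq> 0\<^sub>v p \<and> vb \<in> carrier_vec q \<and> vb \<noteq> 0\<^sub>v q \<and>
         ub \<in> carrier_vec p \<and> is_vec_pencil ub \<and> ub \<noteq> 0\<^sub>v p \<and>
         v \<in> carrier_vec q \<and> is_vec_pencil v \<and> v \<noteq> 0\<^sub>v q \<and>
         P = outer (const_vec u) v \<and> P = outer ub (const_vec vb))) \<and>
    (has_infinite_elementary_divisor P \<longrightarrow>
      (\<exists>u v. u \<in> carrier_vec p \<and> u \<noteq> 0\<^sub>v p \<and> v \<in> carrier_vec q \<and> v \<noteq> 0\<^sub>v q \<and>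
         P = outer (const_vec u) (const_vec v))) \<and>
    (has_pos_column_minimal_index P \<longrightarrow>
      (\<exists>u v. u \<in> carrier_vec p \<and> u \<noteq> 0\<^sub>v p \<and>
         v \<in> carrier_vec q \<and> is_vec_pencil v \<and> v \<noteq> 0\<^sub>v q \<and>
         P = outer (const_vec u) v)) \<and>
    (has_pos_row_minimal_index P \<longrightarrow>
      (\<exists>u v. v \<in> carrier_vec q \<and> v \<noteq> 0\<^sub>v q \<and>
         u \<in> carrier_vec p \<and> is_vec_pencil u \<and> u \<noteq> 0\<^sub>v p \<and>
         P = outer u (const_vec v)))"
proof -
  have dims: "dim_row P = p" "dim_col P = q" using assms(1) by auto
  show ?thesis
    using rank_one_pencil_invariant_factorizations[OF assms(2,3)]
    unfolding const_pencil_factorization_def pencil_const_factorization_def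
      const_const_factorization_def dims
    by blast
qed

end
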